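(* Let $R$ be a reflexive relation on $U$. The set of atoms of $\mathrm{DM(RS)}$ is $\{(\{x\}^{\blacktriangledown},\{x\}^{\blacktriangle})\mid x\in U,\ \{x\}^{\blacktriangle}\text{ is an atom of }\wp(U)^{\blacktriangle}\}$.
   Context: Let $U$ be a set and $R\subseteq U\times U$ a binary relation. For $x\in U$, $R(x)=\{y\in U\mid (x,y)\in R\}$ and $\breve R(x)=\{y\in U\mid (y,x)\in R\}$. For $X\subseteq U$: $X^{\blacktriangledown}=\{x\in U\mid R(x)\subseteq X\}$, $X^{\blacktriangle}=\{x\in U\mid R(x)\cap X\neq\emptyset\}$, $X^{\triangledown}=\{x\in U\mid \breve R(x)\subseteq X\}$, $X^{\vartriangle}=\{x\in U\mid \breve R(x)\cap X\neq\emptyset\}$; composites like $X^{\vartriangle\blacktriangledown}$ mean $(X^{\vartriangle})^{\blacktriangledown}$. $\wp(U)^{\blacktriangledown}=\{X^{\blacktriangledown}\mid X\subseteq U\}$, $\wp(U)^{\blacktriangle}=\{X^{\blacktriangle}\mid X\subseteq U\}$, complete lattices under $\subseteq$ with least element $\emptyset$. $\mathcal S=\{x\in U\mid |R(x)|=1\}$. $\mathrm{RS}=\{(X^{\blacktriangledown},X^{\blacktriangle})\mid X\subseteq U\}$ ordered coordinatewise; $\mathrm{DM(RS)}$ is its Dedekind–MacNeille completion, identified with $\{(A,B)\in\wp(U)^{\blacktriangledown}\times\wp(U)^{\blacktriangle}\mid A^{\vartriangle\blacktriangle}\subseteq B,\ A\cap\mathcal S=B\cap\mathcal S\}$ ordered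 coordinatewise (least element $(\emptyset,\emptyset)$), with meets $\bigwedge_i(X_i,Y_i)=(\bigcap_iX_i,(\bigcap_iY_i)^{\triangledown\blacktriangle})$ and joins $\bigvee_i(X_i,Y_i)=((\bigcup_iX_i)^{\vartriangle\blacktriangledown},\bigcup_iY_i)$. An atom of a lattice with least element $0$ is an element covering $0$. *)

theory Defs
  imports Main
begin

definition bdown :: "'a set \<Rightarrow> 'a rel \<Rightarrow> 'a set \<Rightarrow> 'a set" where
  "bdown U R X = {x \<in> U. R `` {x} \<subseteq> X}"

definition bup :: "'a set \<Rightarrow> 'a rel \<Rightarrow> 'a set \<Rightarrow> 'a set" where
  "bup U R X = {x \<in> U. R `` {x} \<inter> X \<noteq> {}}"

definition wdown :: "'a set \<Rightarrow> 'a rel \<Rightarrow> 'a set \<Rightarrow> 'a set" where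
  "wdown U R X = {x \<in> U. converse R `` {x} \<subseteq> X}"

definition wup :: "'a set \<Rightarrow> 'a rel \<Rightarrow> 'a set \<Rightarrow> 'a set" where
  "wup U R X = {x \<in> U. converse R `` {x} \<inter> X \<noteq> {}}"

definition single_pts :: "'a set \<Rightarrow> 'a rel \<Rightarrow> 'a set" where
  "single_pts U R = {x \<in> U. card (R `` {x}) = 1}"

definition bdown_sets :: "'a set \<Rightarrow> 'a rel \<Rightarrow> 'a set set" where
  "bdown_sets U R = {bdown U R X | X. X \<subseteq> U}"

definition bup_sets :: "'a set \<Rightarrow> 'a rel \<Rightarrow> 'a set set" where
  "bup_sets U R = {bup U R X | X. X \<subseteq> U}"

text \<open>DM(RS), in its identified form, ordered coordinatewise.\<close>
definition DM_RS :: "'a set \<Rightarrow> 'a rel \<Rightarrow> ('a set \<times> 'a set) set" where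
  "DM_RS U R = {(A, B). A \<in> bdown_sets U R \<and> B \<in> bup_sets U R \<and>
      bup U R (wup U R A) \<subseteq> B \<and> A \<inter> single_pts U R = B \<inter> single_pts U R}"

definition pair_le :: "('a set \<times> 'a set) \<Rightarrow> ('a set \<times> 'a set) \<Rightarrow> bool" where
  "pair_le p q \<longleftrightarrow> fst p \<subseteq> fst q \<and> snd p \<subseteq> snd q"

definition is_atom :: "'b set \<Rightarrow> ('b \<Rightarrow> 'b \<Rightarrow> bool) \<Rightarrow> 'b \<Rightarrow> 'b \<Rightarrow> bool" where
  "is_atom P le z a \<longleftrightarrow> a \<in> P \<and> a \<noteq> z \<and> le z a \<and>
     \<not> (\<exists>b\<in>P. le z b \<and> le b a \<and> b \<noteq> z \<and> b \<noteq> a)"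

end

theory Submission
  imports Defs
begin

text \<open>Reflexivity gives \<open>x \<in> {x}\<^sup>\<blacktriangle>\<close>, and a nonempty \<open>X\<^sup>\<blacktriangle>\<close> contains \<open>{y}\<^sup>\<blacktriangle>\<close> for every
  \<open>y \<in> X\<close>. Every \<open>(A, B)\<close> in DM(RS) has \<open>A \<subseteq> B\<close> and lies above \<open>({y}\<^sup>\<blacktriangledown>, {y}\<^sup>\<blacktriangle>)\<close>
  whenever \<open>{y}\<^sup>\<blacktriangle> \<subseteq> B\<close>. So every nonzero element of DM(RS) dominates a nonzero pair
  \<open>({y}\<^sup>\<blacktriangledown>, {y}\<^sup>\<blacktriangle>)\<close>: the atoms are such pairs, and such a pair is an atom exactly when
  \<open>{y}\<^sup>\<blacktriangle>\<close> is an atom of \<open>\<wp>(U)\<^sup>\<blacktriangle>\<close>.\<close>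

lemma is_atomI:
  assumes "a \<in> P" and "a \<noteq> z" and "le z a"
    and "\<And>b. b \<in> P \<Longrightarrow> le z b \<Longrightarrow> le b a \<Longrightarrow> b \<noteq> z \<Longrightarrow> b = a"
  shows "is_atom P le z a"
  using assms by (auto simp: is_atom_def)

lemma is_atomD:
  assumes "is_atom P le z a" and "b \<in> P" and "le z b" and "le b a" and "b \<noteq> z"
  shows "b = a"
  using assms by (auto simp: is_atom_def)

lemma bup_singleton_subset_bup: "y \<in> X \<Longrightarrow> bup U R {y} \<subseteq> bup U R X"
  by (auto simp: bup_def)

locale reflexive_on_carrier =
  fixes U :: "'a set" and R :: "'a rel"
  assumes rel_on_carrier: "R \<subseteq> U \<times> U"
    and refl: "\<forall>x\<in>U. (x, x) \<in> R"
begin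

abbreviation point_pair :: "'a \<Rightarrow> 'a set \<times> 'a set" where
  "point_pair x \<equiv> (bdown U R {x}, bup U R {x})"

lemma single_pts_iff: "y \<in> single_pts U R \<longleftrightarrow> y \<in> U \<and> R `` {y} = {y}"
proof
  assume "y \<in> single_pts U R"
  then have y: "y \<in> U" and "card (R `` {y}) = 1" by (auto simp: single_pts_def)
  then obtain z where "R `` {y} = {z}" by (auto simp: card_1_singleton_iff)
  moreover have "y \<in> R `` {y}" using y refl by auto
  ultimately show "y \<in> U \<and> R `` {y} = {y}" using y by auto
qed (auto simp: single_pts_def)

lemma bdown_singleton: "x \<in> U \<Longrightarrow> bdown U R {x} = (if R `` {x} = {x} then {x} else {})"
  using refl by (auto simp: bdown_def)

lemma mem_bup_singleton: "x \<in> U \<Longrightarrow> x \<in> bup U R {x}"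
  using refl by (auto simp: bup_def)

lemma bup_sets_nonempty_contains_bup_singleton:
  assumes "B \<in> bup_sets U R" and "B \<noteq> {}"
  obtains y where "y \<in> U" and "bup U R {y} \<subseteq> B"
proof -
  obtain X where B: "B = bup U R X" using assms(1) by (auto simp: bup_sets_def)
  then obtain z y where y: "y \<in> X" "(z, y) \<in> R" using assms(2) by (auto simp: bup_def)
  then have "y \<in> U" using rel_on_carrier by blast
  moreover have "bup U R {y} \<subseteq> B" using B y(1) by (simp add: bup_singleton_subset_bup)
  ultimately show thesis by (rule that)
qed

lemma DM_RS_fst_subset_snd:
  assumes "(A, B) \<in> DM_RS U R"
  shows "A \<subseteq> B"
proof
  fix a assume a: "a \<in> A"
  obtain X where "A = bdown U R X" using assms by (auto simp: DM_RS_def bdown_sets_def)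
  with a have aU: "a \<in> U" by (auto simp: bdown_def)
  with a refl have "a \<in> wup U R A" by (auto simp: wup_def)
  with aU refl have "a \<in> bup U R (wup U R A)" by (auto simp: bup_def)
  with assms show "a \<in> B" by (auto simp: DM_RS_def)
qed

lemma point_pair_in_DM_RS:
  assumes x: "x \<in> U"
  shows "point_pair x \<in> DM_RS U R"
proof -
  have closed: "bup U R (wup U R (bdown U R {x})) \<subseteq> bup U R {x}"
  proof (cases "R `` {x} = {x}")
    case True
    then have "wup U R {x} = {x}" using x by (auto simp: wup_def)
    then show ?thesis using True x by (simp add: bdown_singleton)
  qed (use x in \<open>simp add: bdown_singleton wup_def bup_def\<close>)
  have "y \<in> bdown U R {x}" if "y \<in> bup U R {x}" "y \<in> single_pts U R" for y
  proof -
    have "(y, x) \<in> R" and y: "R `` {y} = {y}" using that by (auto simp: bup_def single_pts_iff)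
    then have "y = x" by (metis Image_singleton_iff singletonD)
    with y x show ?thesis by (simp add: bdown_singleton)
  qed
  moreover have "bdown U R {x} \<subseteq> bup U R {x}"
    using x mem_bup_singleton[OF x] by (simp add: bdown_singleton)
  ultimately have "bdown U R {x} \<inter> single_pts U R = bup U R {x} \<inter> single_pts U R"
    by blast
  with closed x show ?thesis unfolding DM_RS_def bdown_sets_def bup_sets_def by blast
qed

lemma point_pair_le_DM_RS:
  assumes AB: "(A, B) \<in> DM_RS U R" and x: "x \<in> U" and sub: "bup U R {x} \<subseteq> B"
  shows "pair_le (point_pair x) (A, B)"
proof -
  have "bdown U R {x} \<subseteq> A"
  proof (cases "R `` {x} = {x}")
    case True
    then have "x \<in> B \<inter> single_pts U R"
      using sub mem_bup_singleton[OF x] x by (auto simp: single_pts_iff)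
    with AB have "x \<in> A" by (auto simp: DM_RS_def)
    then show ?thesis using True x by (simp add: bdown_singleton)
  qed (simp add: x bdown_singleton)
  with sub show ?thesis by (simp add: pair_le_def)
qed

lemma point_pair_nonzero: "x \<in> U \<Longrightarrow> point_pair x \<noteq> ({}, {})"
  using mem_bup_singleton by auto

lemma DM_RS_nonzero_above_point_pair:
  assumes AB: "(A, B) \<in> DM_RS U R" and "(A, B) \<noteq> ({}, {})"
  obtains x where "x \<in> U" and "bup U R {x} \<subseteq> B"
proof -
  have "B \<noteq> {}" using assms DM_RS_fst_subset_snd by blast
  moreover have "B \<in> bup_sets U R" using AB by (auto simp: DM_RS_def)
  ultimately show thesis using that bup_sets_nonempty_contains_bup_singleton by blast
qed

lemma atom_DM_RS_is_point_pair:
  assumes atom: "is_atom (DM_RS U R) pair_le ({}, {}) (A, B)"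
  obtains x where "x \<in> U" and "(A, B) = point_pair x"
    and "is_atom (bup_sets U R) (\<subseteq>) {} (bup U R {x})"
proof -
  have AB: "(A, B) \<in> DM_RS U R" and "(A, B) \<noteq> ({}, {})"
    using atom by (simp_all add: is_atom_def)
  have below_AB: "point_pair y = (A, B)" if y: "y \<in> U" "bup U R {y} \<subseteq> B" for y
    by (rule is_atomD[OF atom point_pair_in_DM_RS[OF y(1)] _ point_pair_le_DM_RS[OF AB y]
          point_pair_nonzero[OF y(1)]]) (simp add: pair_le_def)
  obtain x where x: "x \<in> U" "bup U R {x} \<subseteq> B"
    using DM_RS_nonzero_above_point_pair[OF AB \<open>(A, B) \<noteq> ({}, {})\<close>] .
  have eq: "(A, B) = point_pair x" using below_AB[OF x] by simp
  have "is_atom (bup_sets U R) (\<subseteq>) {} (bup U R {x})"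
  proof (rule is_atomI)
    fix b assume b: "b \<in> bup_sets U R" "b \<subseteq> bup U R {x}" "b \<noteq> {}"
    obtain y where y: "y \<in> U" "bup U R {y} \<subseteq> b"
      using bup_sets_nonempty_contains_bup_singleton b(1,3) .
    then have "bup U R {y} = B" using below_AB[OF y(1)] b(2) eq by simp
    then show "b = bup U R {x}" using eq b(2) y(2) by simp
  qed (use x mem_bup_singleton[OF x(1)] in \<open>auto simp: bup_sets_def\<close>)
  with x(1) eq show thesis by (rule that)
qed

lemma point_pair_atom_DM_RS:
  assumes x: "x \<in> U" and atom: "is_atom (bup_sets U R) (\<subseteq>) {} (bup U R {x})"
  shows "is_atom (DM_RS U R) pair_le ({}, {}) (point_pair x)"
proof (rule is_atomI)
  fix p assume p: "p \<in> DM_RS U R" "pair_le p (point_pair x)" "p \<noteq> ({}, {})"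
  obtain A B where AB: "p = (A, B)" by fastforce
  have "B \<noteq> {}" using p(1,3) AB DM_RS_fst_subset_snd by blast
  moreover have "B \<in> bup_sets U R" using p(1) AB by (simp add: DM_RS_def)
  ultimately have "B = bup U R {x}"
    using is_atomD[OF atom] p(2) AB by (simp add: pair_le_def)
  with point_pair_le_DM_RS[OF p(1)[unfolded AB] x] p(2) AB show "p = point_pair x"
    by (simp add: pair_le_def)
qed (use point_pair_in_DM_RS[OF x] point_pair_nonzero[OF x] in \<open>simp_all add: pair_le_def\<close>)

end

theorem mainTheorem3:
  fixes U :: "'a set" and R :: "'a rel"
  assumes "R \<subseteq> U \<times> U"
    and "\<forall>x\<in>U. (x, x) \<in> R"
  shows "{a. is_atom (DM_RS U R) pair_le ({}, {}) a} =
         {(bdown U R {x}, bup U R {x}) | x. x \<in> U \<and>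
            is_atom (bup_sets U R) (\<subseteq>) {} (bup U R {x})}"
proof -
  interpret reflexive_on_carrier U R using assms by unfold_locales
  show ?thesis
  proof (intro set_eqI iffI)
    fix p assume "p \<in> {a. is_atom (DM_RS U R) pair_le ({}, {}) a}"
    then obtain A B where "p = (A, B)" "is_atom (DM_RS U R) pair_le ({}, {}) (A, B)"
      by (cases p) simp
    then obtain x where "x \<in> U" "p = point_pair x" "is_atom (bup_sets U R) (\<subseteq>) {} (bup U R {x})"
      using atom_DM_RS_is_point_pair by metis
    then show "p \<in> {point_pair x | x. x \<in> U \<and> is_atom (bup_sets U R) (\<subseteq>) {} (bup U R {x})}"
      by blast
  next
    fix p assume "p \<in> {point_pair x | x. x \<in> U \<and> is_atom (bup_sets U R) (\<subseteq>) {} (bup U R {x})}"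
    then obtain x where "x \<in> U" "p = point_pair x" "is_atom (bup_sets U R) (\<subseteq>) {} (bup U R {x})"
      by blast
    then show "p \<in> {a. is_atom (DM_RS U R) pair_le ({}, {}) a}"
      using point_pair_atom_DM_RS by simp
  qed
qed

end
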